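(* For every $n\ge4$, every ortholattice satisfying $n$-Go also satisfies $(n-1)$-Go.
   Context: An ortholattice is a bounded lattice with an operation $'$ satisfying $a''=a$, $a\le b\Rightarrow b'\le a'$, $a\cap a'=0$ and $a\cup a'=1$. Write $a\to b=a'\cup(a\cap b)$. The Godowski identity is $$a_1\overset{\gamma}{\equiv}a_n=(a_1\to a_2)\cap(a_2\to a_3)\cap\cdots\cap(a_{n-1}\to a_n)\cap(a_n\to a_1),$$ and $a_n\overset{\gamma}{\equiv}a_1=(a_n\to a_{n-1})\cap\cdots\cap(a_2\to a_1)\cap(a_1\to a_n)$. $n$-Go is the equation $a_1\overset{\gamma}{\equiv}a_n=a_n\overset{\gamma}{\equiv}a_1$, required for all $a_1,\dots,a_n$. *)

theory Defs
  imports Main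
begin

definition ortholattice :: "('a::bounded_lattice \<Rightarrow> 'a) \<Rightarrow> bool" where
  "ortholattice oc \<longleftrightarrow>
     (\<forall>a. oc (oc a) = a) \<and>
     (\<forall>a b. a \<le> b \<longrightarrow> oc b \<le> oc a) \<and>
     (\<forall>a. inf a (oc a) = bot) \<and>
     (\<forall>a. sup a (oc a) = top)"

definition oimp :: "('a::bounded_lattice \<Rightarrow> 'a) \<Rightarrow> 'a \<Rightarrow> 'a \<Rightarrow> 'a" where
  "oimp oc a b = sup (oc a) (inf a b)"

definition godowski_fwd :: "('a::bounded_lattice \<Rightarrow> 'a) \<Rightarrow> (nat \<Rightarrow> 'a) \<Rightarrow> nat \<Rightarrow> 'a" where
  "godowski_fwd oc a n =
     foldr (\<lambda>i acc. inf (oimp oc (a i) (a (Suc i))) acc) [1..<n] (oimp oc (a n) (a 1))"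

definition godowski_bwd :: "('a::bounded_lattice \<Rightarrow> 'a) \<Rightarrow> (nat \<Rightarrow> 'a) \<Rightarrow> nat \<Rightarrow> 'a" where
  "godowski_bwd oc a n =
     foldr (\<lambda>i acc. inf (oimp oc (a (Suc i)) (a i)) acc) (rev [1..<n]) (oimp oc (a 1) (a n))"

definition satisfies_Go :: "('a::bounded_lattice \<Rightarrow> 'a) \<Rightarrow> nat \<Rightarrow> bool" where
  "satisfies_Go oc n \<longleftrightarrow> (\<forall>a :: nat \<Rightarrow> 'a. godowski_fwd oc a n = godowski_bwd oc a n)"

end

theory Submission
  imports Defs
begin

(* Given a_1,...,a_m, extend the sequence by repeating its
   last element: a_{m+1} = a_m.  The two Godowski terms of length m+1 then
   differ from those of length m only by the extra conjunct a_m -> a_m, and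
   a -> a = a' \<union> a = 1 in any ortholattice.  Hence both Godowski terms of the
   extended sequence coincide with those of the original one, so the (m+1)-Go
   identity for the extended sequence is exactly the m-Go identity for the
   original one. *)

lemma oimp_self:
  assumes compl_sup: "\<And>x. sup x (oc x) = top"
  shows "oimp oc x x = top"
  using compl_sup[of x] by (simp add: oimp_def sup_commute)

text \<open>Repeating the last element does not change the forward Godowski term:
  the new last factor \<open>a\<^sub>m \<rightarrow> a\<^sub>m\<close> is \<open>1\<close>, and the closing factor
  \<open>a\<^sub>m\<^sub>+\<^sub>1 \<rightarrow> a\<^sub>1\<close> is the old closing factor \<open>a\<^sub>m \<rightarrow> a\<^sub>1\<close>.\<close>
lemma godowski_fwd_repeat_last:
  assumes compl_sup: "\<And>x. sup x (oc x) = top" and m: "m \<ge> 1"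
  shows "godowski_fwd oc (a(Suc m := a m)) (Suc m) = godowski_fwd oc a m"
proof -
  let ?b = "a(Suc m := a m)"
  have prefix: "foldr (\<lambda>i acc. inf (oimp oc (?b i) (?b (Suc i))) acc) [1..<m] x
              = foldr (\<lambda>i acc. inf (oimp oc (a i) (a (Suc i))) acc) [1..<m] x" for x
    by (rule foldr_cong) auto
  have "[1..<Suc m] = [1..<m] @ [m]" using m by simp
  then show ?thesis
    using prefix m by (simp add: godowski_fwd_def oimp_self[OF compl_sup])
qed

text \<open>The same holds for the backward Godowski term, where the new first
  factor \<open>a\<^sub>m\<^sub>+\<^sub>1 \<rightarrow> a\<^sub>m\<close> is \<open>1\<close>.\<close>
lemma godowski_bwd_repeat_last:
  assumes compl_sup: "\<And>x. sup x (oc x) = top" and m: "m \<ge> 1"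
  shows "godowski_bwd oc (a(Suc m := a m)) (Suc m) = godowski_bwd oc a m"
proof -
  let ?b = "a(Suc m := a m)"
  have suffix: "foldr (\<lambda>i acc. inf (oimp oc (?b (Suc i)) (?b i)) acc) (rev [1..<m]) x
              = foldr (\<lambda>i acc. inf (oimp oc (a (Suc i)) (a i)) acc) (rev [1..<m]) x" for x
    by (rule foldr_cong) auto
  have "[1..<Suc m] = [1..<m] @ [m]" using m by simp
  then show ?thesis
    using suffix m by (simp add: godowski_bwd_def oimp_self[OF compl_sup])
qed

text \<open>The Godowski identities form a descending chain: \<open>(m+1)\<close>-Go implies
  \<open>m\<close>-Go, by instantiating \<open>(m+1)\<close>-Go at the sequence with repeated last term.\<close>
lemma satisfies_Go_Suc_imp:
  assumes ol: "ortholattice oc" and m: "m \<ge> 1" and go: "satisfies_Go oc (Suc m)"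
  shows "satisfies_Go oc m"
  unfolding satisfies_Go_def
proof
  fix a
  have compl_sup: "\<And>x. sup x (oc x) = top"
    using ol by (simp add: ortholattice_def)
  have "godowski_fwd oc (a(Suc m := a m)) (Suc m) = godowski_bwd oc (a(Suc m := a m)) (Suc m)"
    using go by (simp add: satisfies_Go_def)
  then show "godowski_fwd oc a m = godowski_bwd oc a m"
    by (simp add: godowski_fwd_repeat_last[OF compl_sup m]
                  godowski_bwd_repeat_last[OF compl_sup m])
qed

theorem lemma5p7:
  fixes oc :: "'a::bounded_lattice \<Rightarrow> 'a" and n :: nat
  assumes "n \<ge> 4"
    and "ortholattice oc"
    and "satisfies_Go oc n"
  shows "satisfies_Go oc (n - 1)"
proof -
  have "n = Suc (n - 1)" and "n - 1 \<ge> 1" using assms(1) by simp_all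
  then show ?thesis
    using satisfies_Go_Suc_imp[OF assms(2)] assms(3) by metis
qed

end
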